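(* Let $\mathcal{N}[\phi]=\sup_{\mu\in\Theta}\mu[\phi]$ be a sublinear expectation on $C_{b,Lip}(\mathbb{R})$ satisfying condition (H) below, and set $\underline{\mu}=-\mathcal{N}[-x]$, $\overline{\mu}=\mathcal{N}[x]$, $p(a)=\sup_{y\in[\underline{\mu},\overline{\mu}]}(ya)$, $a\in\mathbb{R}$. Then $\mathcal{N}[\phi]=\sup_{y\in[\underline{\mu},\overline{\mu}]}\phi(y)$ for all $\phi\in C_{b,Lip}(\mathbb{R})$ if and only if for every $\varphi\in C_b^1(\mathbb{R})$ and every $\mu\in\Theta_\varphi$, $$E_\mu[p(\varphi'(\xi))-\xi\varphi'(\xi)]=0.$$
   Context: $C_{b,Lip}(\mathbb{R})$ is the space of bounded Lipschitz functions and $C_b^1(\mathbb{R})$ the bounded $C^1$ functions with bounded derivative. A sublinear expectation on $C_{b,Lip}(\mathbb{R})$ is a monotone, positively homogeneous, constant-preserving, subadditive functional continuous from above along sequences decreasing to $0$; it is represented as $\mathcal{N}[\varphi]=\sup_{\mu\in\Theta}\mu[\varphi]$ for a weakly compact set $\Theta$ of Borel probability measures on $\mathbb{R}$, and extended to other measurable functions (e.g. $x\mapsto x$) by the same supremum. Condition (H): $\lim_{N\to\infty}\mathcal{N}[|x|1_{[|x|>N]}]=0$. Notation: $\xi(x)=x$, $E_\mu[\varphi(\xi)]=\int\varphi\,d\mu$, $\Theta_\varphi=\{\mu\in\Theta:E_\mu[\varphi(\xi)]=\mathcal{N}[\varphi]\}$. *)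

theory Defs
  imports "HOL-Probability.Probability"
begin

definition weak_conv_bc :: "(nat \<Rightarrow> real measure) \<Rightarrow> real measure \<Rightarrow> bool" where
  "weak_conv_bc M_seq M \<longleftrightarrow>
     (\<forall>f :: real \<Rightarrow> real. continuous_on UNIV f \<longrightarrow> bounded (range f) \<longrightarrow>
        ((\<lambda>n. integral\<^sup>L (M_seq n) f) \<longlonglongrightarrow> integral\<^sup>L M f))"

text \<open>A weakly compact set of Borel probability measures on the real line
  (sequential compactness w.r.t. weak convergence; the weak topology on
  probability measures on a Polish space is metrizable).\<close>
definition weakly_compact_prob_set :: "real measure set \<Rightarrow> bool" where
  "weakly_compact_prob_set Th \<longleftrightarrow>
     (\<forall>\<mu>\<in>Th. prob_space \<mu> \<and> sets \<mu> = sets borel) \<and>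
     (\<forall>M_seq :: nat \<Rightarrow> real measure. (\<forall>n. M_seq n \<in> Th) \<longrightarrow>
        (\<exists>(r::nat\<Rightarrow>nat) \<mu>. strict_mono r \<and> \<mu> \<in> Th \<and> weak_conv_bc (M_seq \<circ> r) \<mu>))"

definition NE :: "real measure set \<Rightarrow> (real \<Rightarrow> real) \<Rightarrow> real" where
  "NE Th \<phi> = (SUP \<mu>\<in>Th. integral\<^sup>L \<mu> \<phi>)"

text \<open>Condition (H), with the (nonnegative) expectations taken in extended reals.\<close>
definition condH :: "real measure set \<Rightarrow> bool" where
  "condH Th \<longleftrightarrow>
     ((\<lambda>N::real. SUP \<mu>\<in>Th. \<integral>\<^sup>+ x. ennreal (\<bar>x\<bar> * indicator {x. \<bar>x\<bar> > N} x) \<partial>\<mu>)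
        \<longlongrightarrow> 0) at_top"

definition C_b_Lip :: "(real \<Rightarrow> real) set" where
  "C_b_Lip = {\<phi>. bounded (range \<phi>) \<and> (\<exists>L. L-lipschitz_on UNIV \<phi>)}"

definition C_b_1 :: "(real \<Rightarrow> real) set" where
  "C_b_1 = {\<phi>. (\<forall>x. \<phi> differentiable at x) \<and> continuous_on UNIV (deriv \<phi>)
              \<and> bounded (range \<phi>) \<and> bounded (range (deriv \<phi>))}"

definition Theta_opt :: "real measure set \<Rightarrow> (real \<Rightarrow> real) \<Rightarrow> real measure set" where
  "Theta_opt Th \<phi> = {\<mu>\<in>Th. integral\<^sup>L \<mu> \<phi> = NE Th \<phi>}"

end

theory Submission
  imports Defs
begin

text \<open>Write \<open>I\<close> for the interval \<open>[lower_mean, upper_mean]\<close>; then \<open>p\<close> is the support function of \<open>I\<close>, and it is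
  positively homogeneous. If \<open>\<N>\<close> is the maximal distribution on \<open>I\<close>, test functions vanishing
  on \<open>I\<close> show that every \<open>\<mu> \<in> \<Theta>\<close> is concentrated on \<open>I\<close>, and a \<open>\<mu> \<in> \<Theta>\<^sub>\<phi>\<close> is
  concentrated on the maximizers of \<open>\<phi>\<close> over \<open>I\<close>. At such a maximizer \<open>\<xi>\<close> the first-order
  condition \<open>(y - \<xi>) \<phi>'(\<xi>) \<le> 0\<close> for all \<open>y \<in> I\<close> says exactly \<open>p(\<phi>'(\<xi>)) = \<xi> \<phi>'(\<xi>)\<close>.

  Conversely, homogeneity of \<open>p\<close> gives the integrand \<open>p(\<phi>') - x \<phi>'\<close> a sign for suitable
  \<open>\<phi>\<close>. For a \<open>C\<^sup>1\<close> step \<open>\<phi>(x) = \<psi>(\<sigma> x - p(\<sigma>))\<close> it is \<open>\<le> 0\<close> and vanishes only on the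
  half-line \<open>\<sigma> x \<le> p(\<sigma>)\<close>, so an optimal measure makes \<open>\<N>[\<phi>] = 0\<close>; with \<open>\<sigma> = \<plusminus>1\<close> this
  concentrates all of \<open>\<Theta>\<close> on \<open>I\<close>. For \<open>\<phi>(x) = 1 / (1 + (x - y)\<^sup>2)\<close> with \<open>y \<in> I\<close> it is
  \<open>\<ge> 0\<close> and vanishes only at \<open>y\<close>, so \<open>\<delta>\<^sub>y \<in> \<Theta>\<close>. Concentration bounds \<open>\<N>[\<phi>]\<close> by
  \<open>sup\<^sub>I \<phi>\<close> from above, and the Dirac measures bound it from below.\<close>

section \<open>Support function of an interval\<close>

definition interval_support :: "real \<Rightarrow> real \<Rightarrow> real \<Rightarrow> real" where
  "interval_support a b c = (SUP y\<in>{a..b}. y * c)"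

lemma interval_support_eq_max:
  assumes "a \<le> b"
  shows "interval_support a b c = max (a * c) (b * c)"
proof (cases "0 \<le> c")
  case True
  then have "interval_support a b c = b * c"
    unfolding interval_support_def
    by (intro cSup_eq_maximum) (use assms in \<open>auto intro: mult_right_mono\<close>)
  then show ?thesis using True assms by (simp add: mult_right_mono max_def)
next
  case False
  then have "interval_support a b c = a * c"
    unfolding interval_support_def
    by (intro cSup_eq_maximum) (use assms in \<open>auto intro: mult_right_mono_neg\<close>)
  then show ?thesis using False assms by (simp add: mult_right_mono_neg max_def)
qed

lemma interval_support_upper:
  assumes "y \<in> {a..b}"
  shows "y * c \<le> interval_support a b c"
proof -
  have "a \<le> b" using assms by simp
  then show ?thesis
    using assms mult_right_mono[of y b c] mult_right_mono_neg[of a y c]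
    by (cases "0 \<le> c") (auto simp: interval_support_eq_max)
qed

lemma abs_interval_support_le:
  assumes "a \<le> b"
  shows "\<bar>interval_support a b c\<bar> \<le> (\<bar>a\<bar> + \<bar>b\<bar>) * \<bar>c\<bar>"
proof -
  have "\<bar>max u v\<bar> \<le> \<bar>u\<bar> + \<bar>v\<bar>" for u v :: real by (simp add: max_def)
  from this[of "a * c" "b * c"] show ?thesis
    using assms by (simp add: interval_support_eq_max abs_mult distrib_right)
qed

lemma interval_support_mult_nonneg:
  assumes "a \<le> b" "0 \<le> d"
  shows "interval_support a b (d * c) = d * interval_support a b c"
  using assms by (simp add: interval_support_eq_max max_mult_distrib_left ac_simps)

lemma interval_support_eq_if_first_order:
  assumes x: "x \<in> {a..b}" and foc: "\<And>y. y \<in> {a..b} \<Longrightarrow> (y - x) * c \<le> 0"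
  shows "interval_support a b c = x * c"
  unfolding interval_support_def
  by (rule cSup_eq_maximum) (use x foc in \<open>auto simp: algebra_simps\<close>)

lemma continuous_on_interval_support:
  "a \<le> b \<Longrightarrow> continuous_on UNIV (interval_support a b)"
  by (simp add: interval_support_eq_max continuous_intros)

lemma first_order_condition_on_interval:
  assumes der: "(f has_real_derivative c) (at x)"
    and x: "x \<in> {a..b}" and y: "y \<in> {a..b}"
    and max: "\<And>z. z \<in> {a..b} \<Longrightarrow> f z \<le> f x"
  shows "(y - x) * c \<le> 0"
proof (cases y x rule: linorder_cases)
  case less
  have "0 \<le> c"
  proof (rule ccontr)
    assume "\<not> 0 \<le> c"
    then obtain d where "d > 0" and dec: "\<And>h. 0 < h \<Longrightarrow> h < d \<Longrightarrow> f x < f (x - h)"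
      using DERIV_neg_dec_left[OF der] by force
    let ?h = "min (d / 2) (x - y)"
    have "0 < ?h" "?h < d" "?h \<le> x - y" using \<open>d > 0\<close> less by auto
    then have "f x < f (x - ?h)" and "f (x - ?h) \<le> f x" using x y by (auto intro!: dec max)
    then show False by simp
  qed
  then show ?thesis using less by (simp add: mult_nonpos_nonneg)
next
  case greater
  have "c \<le> 0"
  proof (rule ccontr)
    assume "\<not> c \<le> 0"
    then obtain d where "d > 0" and inc: "\<And>h. 0 < h \<Longrightarrow> h < d \<Longrightarrow> f x < f (x + h)"
      using DERIV_pos_inc_right[OF der] by force
    let ?h = "min (d / 2) (y - x)"
    have "0 < ?h" "?h < d" "?h \<le> y - x" using \<open>d > 0\<close> greater by auto
    then have "f x < f (x + ?h)" and "f (x + ?h) \<le> f x" using x y by (auto intro!: inc max)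
    then show False by simp
  qed
  then show ?thesis using greater by (simp add: mult_nonneg_nonpos)
qed simp

section \<open>A \<open>C\<^sup>1\<close> step function\<close>

lemma has_real_derivative_max0_power2:
  "((\<lambda>t::real. (max 0 t)\<^sup>2) has_real_derivative 2 * max 0 t) (at t)"
proof (cases t "0::real" rule: linorder_cases)
  case less
  have "((\<lambda>t::real. 0) has_real_derivative 2 * max 0 t) (at t)"
    using less by simp
  then show ?thesis
    by (rule has_field_derivative_transform_within_open[where S="{..<0}"]) (use less in auto)
next
  case greater
  have "((\<lambda>t::real. t\<^sup>2) has_real_derivative 2 * max 0 t) (at t)"
    using greater by (auto intro!: derivative_eq_intros)
  then show ?thesis
    by (rule has_field_derivative_transform_within_open[where S="{0<..}"]) (use greater in auto)
next
  case equal
  have left: "((\<lambda>s. (max 0 s)\<^sup>2 / s) \<longlongrightarrow> 0) (at_left (0::real))"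
    by (rule Lim_transform_eventually[OF tendsto_const]) (auto simp: eventually_at_left_field intro: exI[of _ "-1"])
  have right: "((\<lambda>s. (max 0 s)\<^sup>2 / s) \<longlongrightarrow> 0) (at_right (0::real))"
    by (rule Lim_transform_eventually[where f="\<lambda>s. s"])
       (auto simp: eventually_at_right_field power2_eq_square intro: tendsto_ident_at exI[of _ 1])
  show ?thesis
    using left right equal by (simp add: has_field_derivative_iff filterlim_at_split)
qed

text \<open>A \<open>C\<^sup>1\<close> substitute for the indicator of \<open>(0, \<infinity>)\<close>.\<close>
definition soft_step :: "real \<Rightarrow> real" where
  "soft_step t = (max 0 t)\<^sup>2 / (1 + (max 0 t)\<^sup>2)"

definition soft_step_deriv :: "real \<Rightarrow> real" where
  "soft_step_deriv t = 2 * max 0 t / (1 + (max 0 t)\<^sup>2)\<^sup>2"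

lemma one_plus_square_pos [simp]: "0 < 1 + (x::real)\<^sup>2" "1 + (x::real)\<^sup>2 \<noteq> 0"
  by (simp_all add: add_pos_nonneg add_nonneg_eq_0_iff)

lemma soft_step_has_real_derivative: "(soft_step has_real_derivative soft_step_deriv t) (at t)"
proof -
  let ?m = "max 0 t"
  have "(soft_step has_real_derivative
      (2 * ?m * (1 + ?m\<^sup>2) - ?m\<^sup>2 * (2 * ?m)) / ((1 + ?m\<^sup>2) * (1 + ?m\<^sup>2))) (at t)"
    unfolding soft_step_def
    by (intro DERIV_divide DERIV_add[where D=0, simplified] has_real_derivative_max0_power2)
       (auto simp del: max.absorb1 max.absorb2)
  also have "(2 * ?m * (1 + ?m\<^sup>2) - ?m\<^sup>2 * (2 * ?m)) / ((1 + ?m\<^sup>2) * (1 + ?m\<^sup>2)) = soft_step_deriv t"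
    unfolding soft_step_deriv_def by (simp add: algebra_simps power2_eq_square)
  finally show ?thesis .
qed

lemma soft_step_bounds: "0 \<le> soft_step t" "soft_step t \<le> 1"
  unfolding soft_step_def by auto

lemma soft_step_eq_0_iff: "soft_step t = 0 \<longleftrightarrow> t \<le> 0"
  unfolding soft_step_def by (auto simp: max_def)

lemma soft_step_deriv_bounds: "0 \<le> soft_step_deriv t" "soft_step_deriv t \<le> 1"
proof -
  let ?m = "max 0 t"
  have "2 * ?m \<le> 1 + ?m\<^sup>2"
    using sum_squares_bound[of ?m 1] by (simp add: power2_eq_square)
  also have "\<dots> \<le> (1 + ?m\<^sup>2)\<^sup>2"
    using power_increasing[of 1 2 "1 + ?m\<^sup>2"] by simp
  finally show "soft_step_deriv t \<le> 1" "0 \<le> soft_step_deriv t"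
    unfolding soft_step_deriv_def by (simp_all add: divide_le_eq_1)
qed

lemma soft_step_deriv_eq_0_iff: "soft_step_deriv t = 0 \<longleftrightarrow> t \<le> 0"
  unfolding soft_step_deriv_def by (auto simp: max_def)

lemma mult_soft_step_deriv_nonneg: "0 \<le> t * soft_step_deriv t"
  using soft_step_deriv_bounds(1)[of t] soft_step_deriv_eq_0_iff[of t]
  by (cases "t \<le> 0") simp_all

lemma continuous_on_soft_step_deriv: "continuous_on UNIV soft_step_deriv"
  unfolding soft_step_deriv_def
  by (intro continuous_intros) (auto simp del: max.absorb1 max.absorb2)

section \<open>Test functions\<close>

lemma C_b_1I:
  fixes f d :: "real \<Rightarrow> real"
  assumes "\<And>x. (f has_real_derivative d x) (at x)" "continuous_on UNIV d"
    and "bounded (range f)" "bounded (range d)"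
  shows "f \<in> C_b_1" "deriv f = d"
proof -
  show "deriv f = d" using DERIV_imp_deriv assms(1) by blast
  then show "f \<in> C_b_1"
    using assms by (auto simp: C_b_1_def real_differentiable_def)
qed

lemma C_b_1_has_real_derivative:
  "f \<in> C_b_1 \<Longrightarrow> (f has_real_derivative deriv f x) (at x)"
  by (simp add: C_b_1_def DERIV_deriv_iff_real_differentiable)

lemma C_b_1_deriv_bounded_continuous:
  "f \<in> C_b_1 \<Longrightarrow> continuous_on UNIV (deriv f) \<and> bounded (range (deriv f))"
  by (simp add: C_b_1_def)

lemma C_b_1_subset_C_b_Lip: "C_b_1 \<subseteq> C_b_Lip"
proof
  fix f :: "real \<Rightarrow> real" assume f: "f \<in> C_b_1"
  then obtain B where B: "\<And>x. norm (deriv f x) \<le> B"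
    unfolding C_b_1_def bounded_iff by auto
  have "B-lipschitz_on UNIV f"
  proof (rule lipschitz_onI)
    show "dist (f x) (f y) \<le> B * dist x y" for x y
      using field_differentiable_bound[OF convex_UNIV, of f "deriv f" B x y]
        C_b_1_has_real_derivative[OF f] B by (auto simp: dist_norm)
    show "0 \<le> B" using B[of 0] norm_ge_zero order_trans by blast
  qed
  then show "f \<in> C_b_Lip" using f by (auto simp: C_b_1_def C_b_Lip_def)
qed

lemma C_b_Lip_bounded_continuous:
  "f \<in> C_b_Lip \<Longrightarrow> continuous_on UNIV f \<and> bounded (range f)"
  by (auto simp: C_b_Lip_def intro: lipschitz_on_continuous_on)

lemma soft_step_affine_C_b_1:
  "(\<lambda>x. soft_step (s * x - c)) \<in> C_b_1"
  "deriv (\<lambda>x. soft_step (s * x - c)) = (\<lambda>x. s * soft_step_deriv (s * x - c))"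
proof -
  have "((\<lambda>x. soft_step (s * x - c)) has_real_derivative s * soft_step_deriv (s * x - c)) (at x)" for x
  proof -
    have "((\<lambda>x. s * x - c) has_real_derivative s) (at x)"
      by (auto intro!: derivative_eq_intros)
    from DERIV_chain2[OF soft_step_has_real_derivative this] show ?thesis
      by (simp add: mult.commute)
  qed
  moreover have "continuous_on UNIV (\<lambda>x. s * soft_step_deriv (s * x - c))"
    by (intro continuous_intros continuous_on_compose2[OF continuous_on_soft_step_deriv]) auto
  moreover have "bounded (range (\<lambda>x. soft_step (s * x - c)))"
    using soft_step_bounds by (intro boundedI[of _ 1]) (auto simp: abs_le_iff intro: order_trans[of _ 0])
  moreover have "bounded (range (\<lambda>x. s * soft_step_deriv (s * x - c)))"
    using soft_step_deriv_bounds
    by (intro boundedI[of _ "\<bar>s\<bar>"]) (auto simp: abs_mult intro!: mult_left_le)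
  ultimately show "(\<lambda>x. soft_step (s * x - c)) \<in> C_b_1"
    "deriv (\<lambda>x. soft_step (s * x - c)) = (\<lambda>x. s * soft_step_deriv (s * x - c))"
    by (rule C_b_1I)+
qed

lemma Cauchy_kernel_C_b_1:
  "(\<lambda>x. 1 / (1 + (x - y)\<^sup>2)) \<in> C_b_1"
  "deriv (\<lambda>x. 1 / (1 + (x - y)\<^sup>2)) = (\<lambda>x. 2 / (1 + (x - y)\<^sup>2)\<^sup>2 * (y - x))"
proof -
  have "((\<lambda>x. 1 / (1 + (x - y)\<^sup>2)) has_real_derivative 2 / (1 + (x - y)\<^sup>2)\<^sup>2 * (y - x)) (at x)" for x
    using one_plus_square_pos(2)[of "x - y"] by (auto intro!: derivative_eq_intros simp: power2_eq_square field_simps)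
  moreover have "continuous_on UNIV (\<lambda>x. 2 / (1 + (x - y)\<^sup>2)\<^sup>2 * (y - x))"
    by (intro continuous_intros) auto
  moreover have "bounded (range (\<lambda>x. 1 / (1 + (x - y)\<^sup>2)))"
    by (intro boundedI[of _ 1]) auto
  moreover have "bounded (range (\<lambda>x. 2 / (1 + (x - y)\<^sup>2)\<^sup>2 * (y - x)))"
  proof (intro boundedI[of _ 1])
    fix z assume "z \<in> range (\<lambda>x. 2 / (1 + (x - y)\<^sup>2)\<^sup>2 * (y - x))"
    then obtain x where z: "z = 2 / (1 + (x - y)\<^sup>2)\<^sup>2 * (y - x)" by blast
    have "2 * \<bar>y - x\<bar> \<le> 1 + (x - y)\<^sup>2"
      using sum_squares_bound[of "\<bar>y - x\<bar>" 1] by (simp add: power2_eq_square algebra_simps)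
    also have "\<dots> \<le> (1 + (x - y)\<^sup>2)\<^sup>2"
      using power_increasing[of 1 2 "1 + (x - y)\<^sup>2"] by simp
    finally have "2 * \<bar>y - x\<bar> / (1 + (x - y)\<^sup>2)\<^sup>2 \<le> 1"
      by (simp add: divide_le_eq_1)
    then show "norm z \<le> 1" unfolding z real_norm_def abs_mult by simp
  qed
  ultimately show "(\<lambda>x. 1 / (1 + (x - y)\<^sup>2)) \<in> C_b_1"
    "deriv (\<lambda>x. 1 / (1 + (x - y)\<^sup>2)) = (\<lambda>x. 2 / (1 + (x - y)\<^sup>2)\<^sup>2 * (y - x))"
    by (rule C_b_1I)+
qed

section \<open>Sublinear expectations represented by weakly compact sets\<close>

lemma integral_nonpos_eq_0_iff_AE:
  fixes f :: "'a \<Rightarrow> real"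
  assumes "integrable M f" "AE x in M. f x \<le> 0"
  shows "integral\<^sup>L M f = 0 \<longleftrightarrow> (AE x in M. f x = 0)"
  using integral_nonneg_eq_0_iff_AE[of M "\<lambda>x. - f x"] assms by simp

lemma nn_integral_abs_le_tail:
  fixes M :: "real measure"
  assumes "prob_space M" "sets M = sets borel" "0 \<le> N"
  shows "(\<integral>\<^sup>+x. ennreal \<bar>x\<bar> \<partial>M)
    \<le> ennreal N + (\<integral>\<^sup>+x. ennreal (\<bar>x\<bar> * indicator {x. \<bar>x\<bar> > N} x) \<partial>M)"
proof -
  interpret prob_space M by fact
  have "(\<integral>\<^sup>+x. ennreal \<bar>x\<bar> \<partial>M) \<le> (\<integral>\<^sup>+x. ennreal N + ennreal (\<bar>x\<bar> * indicator {x. \<bar>x\<bar> > N} x) \<partial>M)"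
  proof (rule nn_integral_mono)
    fix x :: real
    show "ennreal \<bar>x\<bar> \<le> ennreal N + ennreal (\<bar>x\<bar> * indicator {x. \<bar>x\<bar> > N} x)"
      by (cases "N < \<bar>x\<bar>") (auto intro: add_increasing ennreal_leI)
  qed
  also have "\<dots> = ennreal N + (\<integral>\<^sup>+x. ennreal (\<bar>x\<bar> * indicator {x. \<bar>x\<bar> > N} x) \<partial>M)"
  proof (subst nn_integral_add)
    have "(\<lambda>x. ennreal (\<bar>x\<bar> * indicator {x. \<bar>x\<bar> > N} x)) \<in> borel_measurable borel"
      by measurable
    then show "(\<lambda>x. ennreal (\<bar>x\<bar> * indicator {x. \<bar>x\<bar> > N} x)) \<in> borel_measurable M"
      unfolding measurable_cong_sets[OF assms(2) refl] .
  qed (simp_all add: emeasure_space_1)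
  finally show ?thesis .
qed

locale sublinear_expectation =
  fixes Th :: "real measure set"
  assumes nonempty: "Th \<noteq> {}"
    and weakly_compact: "weakly_compact_prob_set Th"
    and tails_vanish: "condH Th"
begin

lemma prob_space: "\<mu> \<in> Th \<Longrightarrow> prob_space \<mu>"
  using weakly_compact unfolding weakly_compact_prob_set_def by blast

lemma sets_eq_borel: "\<mu> \<in> Th \<Longrightarrow> sets \<mu> = sets borel"
  using weakly_compact unfolding weakly_compact_prob_set_def by blast

lemma borel_measurable_continuous:
  assumes "\<mu> \<in> Th" "continuous_on UNIV f"
  shows "f \<in> borel_measurable \<mu>"
  unfolding measurable_cong_sets[OF sets_eq_borel[OF assms(1)] refl]
  using assms(2) by (rule borel_measurable_continuous_onI)

lemma integrable_bounded_continuous: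
  fixes f :: "real \<Rightarrow> real"
  assumes "\<mu> \<in> Th" "continuous_on UNIV f" "bounded (range f)"
  shows "integrable \<mu> f"
proof -
  interpret prob_space \<mu> using prob_space assms(1) .
  obtain K where "\<And>x. \<bar>f x\<bar> \<le> K" using assms(3) by (auto simp: bounded_iff)
  then show ?thesis
    using borel_measurable_continuous[OF assms(1,2)] by (intro integrable_const_bound[where B=K]) auto
qed

lemma bdd_above_integrals:
  fixes f :: "real \<Rightarrow> real"
  assumes "continuous_on UNIV f" "bounded (range f)"
  shows "bdd_above ((\<lambda>\<mu>. integral\<^sup>L \<mu> f) ` Th)"
proof -
  obtain K where K: "\<And>x. f x \<le> K" using assms(2) by (auto simp: bounded_iff abs_le_iff)
  have "integral\<^sup>L \<mu> f \<le> K" if "\<mu> \<in> Th" for \<mu>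
    using prob_space.integral_le_const[OF prob_space[OF that]] integrable_bounded_continuous[OF that assms] K
    by simp
  then show ?thesis by (intro bdd_aboveI2)
qed

lemma integral_le_NE:
  fixes f :: "real \<Rightarrow> real"
  assumes "\<mu> \<in> Th" "continuous_on UNIV f" "bounded (range f)"
  shows "integral\<^sup>L \<mu> f \<le> NE Th f"
  unfolding NE_def using assms bdd_above_integrals by (intro cSUP_upper)

lemma Theta_opt_nonempty:
  fixes f :: "real \<Rightarrow> real"
  assumes cont: "continuous_on UNIV f" and bdd: "bounded (range f)"
  shows "Theta_opt Th f \<noteq> {}"
proof -
  have "\<exists>\<mu>\<in>Th. NE Th f - inverse (real (Suc n)) < integral\<^sup>L \<mu> f" for n
  proof -
    have "NE Th f - inverse (real (Suc n)) < NE Th f" by simp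
    then show ?thesis
      unfolding NE_def using less_cSUP_iff[OF nonempty bdd_above_integrals[OF cont bdd]] by blast
  qed
  then obtain M where M: "\<And>n. M n \<in> Th" "\<And>n. NE Th f - inverse (real (Suc n)) < integral\<^sup>L (M n) f"
    by metis
  obtain r \<mu> where r: "strict_mono r" "\<mu> \<in> Th" "weak_conv_bc (M \<circ> r) \<mu>"
    using weakly_compact M(1) unfolding weakly_compact_prob_set_def by meson
  have "(\<lambda>n. integral\<^sup>L (M (r n)) f) \<longlonglongrightarrow> integral\<^sup>L \<mu> f"
    using r(3) cont bdd unfolding weak_conv_bc_def by auto
  moreover have "(\<lambda>n. integral\<^sup>L (M (r n)) f) \<longlonglongrightarrow> NE Th f"
  proof (rule tendsto_sandwich)
    show "\<forall>\<^sub>F n in sequentially. NE Th f - inverse (real (Suc (r n))) \<le> integral\<^sup>L (M (r n)) f"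
      using M(2) by (intro always_eventually allI less_imp_le)
    show "\<forall>\<^sub>F n in sequentially. integral\<^sup>L (M (r n)) f \<le> NE Th f"
      using integral_le_NE[OF M(1) cont bdd] by simp
    have "(\<lambda>n. inverse (real (Suc (r n)))) \<longlonglongrightarrow> 0"
      using LIMSEQ_subseq_LIMSEQ[OF LIMSEQ_inverse_real_of_nat r(1)] by (simp add: o_def)
    then show "(\<lambda>n. NE Th f - inverse (real (Suc (r n)))) \<longlonglongrightarrow> NE Th f"
      using tendsto_diff[OF tendsto_const[of "NE Th f"]] by fastforce
  qed simp
  ultimately have "integral\<^sup>L \<mu> f = NE Th f" by (rule LIMSEQ_unique)
  then show ?thesis using r(2) by (auto simp: Theta_opt_def)
qed

lemma AE_eq_0_if_NE_eq_0:
  fixes f :: "real \<Rightarrow> real"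
  assumes "\<mu> \<in> Th" "continuous_on UNIV f" "bounded (range f)"
    and "\<And>x. 0 \<le> f x" "NE Th f = 0"
  shows "AE x in \<mu>. f x = 0"
proof -
  have "0 \<le> integral\<^sup>L \<mu> f" using assms(4) by simp
  moreover have "integral\<^sup>L \<mu> f \<le> 0" using integral_le_NE[OF assms(1-3)] assms(5) by simp
  ultimately have "integral\<^sup>L \<mu> f = 0" by simp
  then show ?thesis
    using integral_nonneg_eq_0_iff_AE integrable_bounded_continuous[OF assms(1-3)] assms(4) by blast
qed

lemma first_moment_bounded: "\<exists>B\<ge>0. \<forall>\<mu>\<in>Th. (\<integral>\<^sup>+x. ennreal \<bar>x\<bar> \<partial>\<mu>) \<le> ennreal B"
proof -
  let ?tail = "\<lambda>N \<mu>. \<integral>\<^sup>+x. ennreal (\<bar>x\<bar> * indicator {x. \<bar>x\<bar> > N} x) \<partial>\<mu>"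
  have "\<forall>\<^sub>F N in at_top. (SUP \<mu>\<in>Th. ?tail N \<mu>) < 1"
    using tails_vanish unfolding condH_def by (rule order_tendstoD) simp
  then obtain N where N: "0 \<le> N" "(SUP \<mu>\<in>Th. ?tail N \<mu>) < 1"
    unfolding eventually_at_top_linorder by (metis max.cobounded1 max.cobounded2)
  have "(\<integral>\<^sup>+x. ennreal \<bar>x\<bar> \<partial>\<mu>) \<le> ennreal (N + 1)" if "\<mu> \<in> Th" for \<mu>
  proof -
    have "(\<integral>\<^sup>+x. ennreal \<bar>x\<bar> \<partial>\<mu>) \<le> ennreal N + ?tail N \<mu>"
      using nn_integral_abs_le_tail[OF prob_space[OF that] sets_eq_borel[OF that] N(1)] .
    also have "\<dots> \<le> ennreal N + 1"
      using SUP_upper[OF that, of "?tail N"] N(2) by (intro add_left_mono) simp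
    finally show ?thesis using N(1) by (simp add: ennreal_plus)
  qed
  then show ?thesis using N(1) by (intro exI[of _ "N + 1"]) auto
qed

lemma integrable_ident: "\<mu> \<in> Th \<Longrightarrow> integrable \<mu> (\<lambda>x. x)"
  using first_moment_bounded borel_measurable_continuous[of \<mu> "\<lambda>x. x"]
  by (fastforce intro!: integrableI_bounded simp: top_unique less_top[symmetric])

lemma mean_bounded: "\<exists>B. \<forall>\<mu>\<in>Th. \<bar>\<integral>x. x \<partial>\<mu>\<bar> \<le> B"
proof -
  obtain B where "0 \<le> B" and B: "\<And>\<mu>. \<mu> \<in> Th \<Longrightarrow> (\<integral>\<^sup>+x. ennreal \<bar>x\<bar> \<partial>\<mu>) \<le> ennreal B"
    using first_moment_bounded by blast
  have "\<bar>\<integral>x. x \<partial>\<mu>\<bar> \<le> B" if "\<mu> \<in> Th" for \<mu>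
  proof -
    have "ennreal (\<integral>x. \<bar>x\<bar> \<partial>\<mu>) = (\<integral>\<^sup>+x. ennreal \<bar>x\<bar> \<partial>\<mu>)"
      using integrable_ident[OF that] by (simp add: nn_integral_eq_integral)
    then have "ennreal (\<integral>x. \<bar>x\<bar> \<partial>\<mu>) \<le> ennreal B"
      using B[OF that] by simp
    then have "(\<integral>x. \<bar>x\<bar> \<partial>\<mu>) \<le> B"
      using \<open>0 \<le> B\<close> by simp
    then show ?thesis using integral_abs_bound[of \<mu> "\<lambda>x. x"] by linarith
  qed
  then show ?thesis by blast
qed

definition lower_mean :: real where "lower_mean = - NE Th (\<lambda>x. - x)"

definition upper_mean :: real where "upper_mean = NE Th (\<lambda>x. x)"

abbreviation support :: "real \<Rightarrow> real" where
  "support \<equiv> interval_support lower_mean upper_mean"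

lemma lower_mean_le_upper_mean: "lower_mean \<le> upper_mean"
proof -
  obtain B where B: "\<And>\<mu>. \<mu> \<in> Th \<Longrightarrow> \<bar>\<integral>x. x \<partial>\<mu>\<bar> \<le> B" using mean_bounded by blast
  obtain \<mu> where \<mu>: "\<mu> \<in> Th" using nonempty by blast
  have "(\<integral>x. - x \<partial>\<mu>) \<le> NE Th (\<lambda>x. - x)" "(\<integral>x. x \<partial>\<mu>) \<le> NE Th (\<lambda>x. x)"
    unfolding NE_def using B by (auto intro!: cSUP_upper[OF \<mu>] bdd_aboveI[of _ B] dest: abs_le_D1 abs_le_D2)
  then show ?thesis by (simp add: lower_mean_def upper_mean_def)
qed

lemma support_one: "support 1 = upper_mean" and support_minus_one: "support (- 1) = - lower_mean"
  using lower_mean_le_upper_mean by (simp_all add: interval_support_eq_max)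

definition maximal_distribution :: bool where
  "maximal_distribution \<longleftrightarrow>
     (\<forall>\<phi>\<in>C_b_Lip. NE Th \<phi> = (SUP y\<in>{lower_mean..upper_mean}. \<phi> y))"

definition first_order_optimality :: bool where
  "first_order_optimality \<longleftrightarrow>
     (\<forall>\<phi>\<in>C_b_1. \<forall>\<mu>\<in>Theta_opt Th \<phi>. (\<integral>x. support (deriv \<phi> x) - x * deriv \<phi> x \<partial>\<mu>) = 0)"

lemma integrable_optimality_integrand:
  assumes "\<mu> \<in> Th" "continuous_on UNIV d" "bounded (range d)"
  shows "integrable \<mu> (\<lambda>x. support (d x) - x * d x)"
proof -
  interpret prob_space \<mu> using prob_space assms(1) .
  obtain K where K: "\<And>x. \<bar>d x\<bar> \<le> K" using assms(3) by (auto simp: bounded_iff)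
  let ?B = "\<lambda>x. (\<bar>lower_mean\<bar> + \<bar>upper_mean\<bar>) * K + K * \<bar>x\<bar>"
  show ?thesis
  proof (rule Bochner_Integration.integrable_bound)
    show "integrable \<mu> ?B" using integrable_ident[OF assms(1)] by auto
    have "continuous_on UNIV (\<lambda>x. support (d x))"
      by (rule continuous_on_compose2[OF continuous_on_interval_support[OF lower_mean_le_upper_mean] assms(2)]) auto
    then show "(\<lambda>x. support (d x) - x * d x) \<in> borel_measurable \<mu>"
      by (intro borel_measurable_continuous[OF assms(1)] continuous_intros assms(2))
    have "\<bar>support (d x) - x * d x\<bar> \<le> ?B x" for x
    proof -
      have "\<bar>support (d x)\<bar> \<le> (\<bar>lower_mean\<bar> + \<bar>upper_mean\<bar>) * \<bar>d x\<bar>"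
        by (rule abs_interval_support_le[OF lower_mean_le_upper_mean])
      also have "\<dots> \<le> (\<bar>lower_mean\<bar> + \<bar>upper_mean\<bar>) * K" by (intro mult_left_mono K) simp
      moreover have "\<bar>x * d x\<bar> \<le> K * \<bar>x\<bar>"
        using mult_left_mono[OF K[of x], of "\<bar>x\<bar>"] by (simp add: abs_mult ac_simps)
      ultimately show ?thesis using abs_triangle_ineq4[of "support (d x)" "x * d x"] by linarith
    qed
    then show "AE x in \<mu>. norm (support (d x) - x * d x) \<le> norm (?B x)"
      by (intro AE_I2) (metis abs_ge_self order_trans real_norm_def)
  qed
qed

lemma AE_in_interval_if_NE_soft_step_eq_0:
  assumes "\<And>s. s \<in> {1, -1} \<Longrightarrow> NE Th (\<lambda>x. soft_step (s * x - support s)) = 0" and "\<mu> \<in> Th"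
  shows "AE x in \<mu>. x \<in> {lower_mean..upper_mean}"
proof -
  have "AE x in \<mu>. soft_step (s * x - support s) = 0" if "s \<in> {1, -1}" for s
  proof -
    have "(\<lambda>x. soft_step (s * x - support s)) \<in> C_b_Lip"
      using soft_step_affine_C_b_1(1) C_b_1_subset_C_b_Lip by blast
    then show ?thesis
      using C_b_Lip_bounded_continuous soft_step_bounds(1) assms(1)[OF that]
      by (intro AE_eq_0_if_NE_eq_0[OF assms(2)]) simp_all
  qed
  from this[of 1] this[of "-1"]
  have "AE x in \<mu>. soft_step (x - upper_mean) = 0" "AE x in \<mu>. soft_step (lower_mean - x) = 0"
    by (simp_all add: support_one support_minus_one)
  then show ?thesis by eventually_elim (simp add: soft_step_eq_0_iff)
qed

lemma NE_soft_step_eq_0_if_maximal: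
  assumes maximal_distribution
  shows "NE Th (\<lambda>x. soft_step (s * x - support s)) = 0"
proof -
  have "(\<lambda>x. soft_step (s * x - support s)) \<in> C_b_Lip"
    using soft_step_affine_C_b_1(1) C_b_1_subset_C_b_Lip by blast
  then have "NE Th (\<lambda>x. soft_step (s * x - support s))
      = (SUP y\<in>{lower_mean..upper_mean}. soft_step (s * y - support s))"
    using assms by (simp add: maximal_distribution_def)
  also have "\<dots> = (SUP y\<in>{lower_mean..upper_mean}. 0)"
    using interval_support_upper by (intro SUP_cong refl) (simp add: soft_step_eq_0_iff mult.commute)
  also have "\<dots> = 0" using lower_mean_le_upper_mean by simp
  finally show ?thesis .
qed

lemma AE_maximizer_if_maximal:
  assumes maximal_distribution and "\<phi> \<in> C_b_Lip" and "\<mu> \<in> Theta_opt Th \<phi>"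
  shows "AE x in \<mu>. x \<in> {lower_mean..upper_mean} \<and> (\<forall>y\<in>{lower_mean..upper_mean}. \<phi> y \<le> \<phi> x)"
proof -
  let ?I = "{lower_mean..upper_mean}"
  define M where "M = (SUP y\<in>?I. \<phi> y)"
  have \<mu>: "\<mu> \<in> Th" "integral\<^sup>L \<mu> \<phi> = M"
    using assms by (auto simp: Theta_opt_def maximal_distribution_def M_def)
  interpret prob_space \<mu> using prob_space \<mu>(1) .
  have cont: "continuous_on UNIV \<phi>" and bdd: "bounded (range \<phi>)"
    using C_b_Lip_bounded_continuous assms(2) by blast+
  have le_M: "\<phi> y \<le> M" if "y \<in> ?I" for y
    unfolding M_def using that bounded_imp_bdd_above[OF bdd]
    by (intro cSUP_upper) (auto intro: bdd_above_mono)
  have in_I: "AE x in \<mu>. x \<in> ?I"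
    using AE_in_interval_if_NE_soft_step_eq_0[OF NE_soft_step_eq_0_if_maximal[OF assms(1)] \<mu>(1)] .
  have int: "integrable \<mu> (\<lambda>x. M - \<phi> x)"
    using integrable_bounded_continuous[OF \<mu>(1) cont bdd] by simp
  have "integral\<^sup>L \<mu> (\<lambda>x. M - \<phi> x) = 0"
    using integrable_bounded_continuous[OF \<mu>(1) cont bdd] \<mu>(2) by (simp add: prob_space)
  moreover have "AE x in \<mu>. 0 \<le> M - \<phi> x"
    using in_I by eventually_elim (simp add: le_M)
  ultimately have "AE x in \<mu>. M - \<phi> x = 0"
    using integral_nonneg_eq_0_iff_AE[OF int] by blast
  with in_I show ?thesis
    by eventually_elim (use le_M in auto)
qed

lemma first_order_optimality_if_maximal:
  assumes maximal_distribution
  shows first_order_optimality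
  unfolding first_order_optimality_def
proof (intro ballI)
  fix \<phi> \<mu> assume \<phi>: "\<phi> \<in> C_b_1" and \<mu>: "\<mu> \<in> Theta_opt Th \<phi>"
  have "AE x in \<mu>. support (deriv \<phi> x) - x * deriv \<phi> x = 0"
    using AE_maximizer_if_maximal[OF assms subsetD[OF C_b_1_subset_C_b_Lip \<phi>] \<mu>]
  proof eventually_elim
    case (elim x)
    have "support (deriv \<phi> x) = x * deriv \<phi> x"
      using elim by (intro interval_support_eq_if_first_order
          first_order_condition_on_interval[OF C_b_1_has_real_derivative[OF \<phi>]]) auto
    then show ?case by simp
  qed
  then show "(\<integral>x. support (deriv \<phi> x) - x * deriv \<phi> x \<partial>\<mu>) = 0"
    by (rule integral_eq_zero_AE)
qed

lemma first_order_optimalityE: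
  assumes first_order_optimality and "\<phi> \<in> C_b_1"
  obtains \<mu> where "\<mu> \<in> Th" "integral\<^sup>L \<mu> \<phi> = NE Th \<phi>"
    "integrable \<mu> (\<lambda>x. support (deriv \<phi> x) - x * deriv \<phi> x)"
    "(\<integral>x. support (deriv \<phi> x) - x * deriv \<phi> x \<partial>\<mu>) = 0"
proof -
  have "continuous_on UNIV \<phi>" "bounded (range \<phi>)"
    using C_b_Lip_bounded_continuous C_b_1_subset_C_b_Lip assms(2) by blast+
  then obtain \<mu> where \<mu>: "\<mu> \<in> Theta_opt Th \<phi>" using Theta_opt_nonempty by blast
  then have "\<mu> \<in> Th" by (simp add: Theta_opt_def)
  then show ?thesis
    using that \<mu> assms integrable_optimality_integrand C_b_1_deriv_bounded_continuous
    by (auto simp: Theta_opt_def first_order_optimality_def)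
qed

lemma NE_soft_step_eq_0_if_first_order:
  assumes first_order_optimality
  shows "NE Th (\<lambda>x. soft_step (s * x - support s)) = 0"
proof -
  let ?t = "\<lambda>x. s * x - support s"
  \<comment> \<open>positive homogeneity of \<open>support\<close>, since \<open>soft_step_deriv \<ge> 0\<close>\<close>
  have integrand: "support (s * soft_step_deriv (?t x)) - x * (s * soft_step_deriv (?t x))
      = - (?t x * soft_step_deriv (?t x))" for x
  proof -
    have "support (soft_step_deriv (?t x) * s) = soft_step_deriv (?t x) * support s"
      using lower_mean_le_upper_mean soft_step_deriv_bounds(1) by (rule interval_support_mult_nonneg)
    then show ?thesis by (simp add: mult.commute) (simp add: algebra_simps)
  qed
  let ?\<phi> = "\<lambda>x. soft_step (?t x)"
  have J: "(\<lambda>x. support (deriv ?\<phi> x) - x * deriv ?\<phi> x) = (\<lambda>x. - (?t x * soft_step_deriv (?t x)))"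
    unfolding soft_step_affine_C_b_1(2) using integrand by simp
  obtain \<mu> where \<mu>: "\<mu> \<in> Th" "integral\<^sup>L \<mu> ?\<phi> = NE Th ?\<phi>"
    and int: "integrable \<mu> (\<lambda>x. - (?t x * soft_step_deriv (?t x)))"
    and zero: "(\<integral>x. - (?t x * soft_step_deriv (?t x)) \<partial>\<mu>) = 0"
    using first_order_optimalityE[OF assms soft_step_affine_C_b_1(1), of s "support s"] unfolding J by blast
  have "AE x in \<mu>. - (?t x * soft_step_deriv (?t x)) = 0"
    using integral_nonpos_eq_0_iff_AE[OF int] zero mult_soft_step_deriv_nonneg by simp
  then have "AE x in \<mu>. soft_step (?t x) = 0"
    by eventually_elim (auto simp: soft_step_deriv_eq_0_iff soft_step_eq_0_iff)
  then show ?thesis using \<mu>(2) integral_eq_zero_AE by metis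
qed

lemma Dirac_in_Th_if_first_order:
  assumes first_order_optimality and y: "y \<in> {lower_mean..upper_mean}"
  shows "\<exists>\<mu>\<in>Th. AE x in \<mu>. x = y"
proof -
  let ?k = "\<lambda>x. 2 / (1 + (x - y)\<^sup>2)\<^sup>2"
  let ?J = "\<lambda>x. support (?k x * (y - x)) - x * (?k x * (y - x))"
  let ?\<phi> = "\<lambda>x. 1 / (1 + (x - y)\<^sup>2)"
  have J: "(\<lambda>x. support (deriv ?\<phi> x) - x * deriv ?\<phi> x) = ?J"
    unfolding Cauchy_kernel_C_b_1(2) ..
  obtain \<mu> where \<mu>: "\<mu> \<in> Th" and int: "integrable \<mu> ?J" and zero: "integral\<^sup>L \<mu> ?J = 0"
    using first_order_optimalityE[OF assms(1) Cauchy_kernel_C_b_1(1), of y] unfolding J by blast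
  have J_lower: "k * (y - x)\<^sup>2 \<le> support (k * (y - x)) - x * (k * (y - x))" if "0 \<le> k" for k x
  proof -
    have "k * (y - x)\<^sup>2 = k * (y * (y - x)) - x * (k * (y - x))"
      by (simp add: power2_eq_square algebra_simps)
    also have "\<dots> \<le> k * support (y - x) - x * (k * (y - x))"
      using interval_support_upper[OF y, of "y - x"] that by (simp add: mult_left_mono)
    also have "\<dots> = support (k * (y - x)) - x * (k * (y - x))"
      using interval_support_mult_nonneg[OF lower_mean_le_upper_mean that] by simp
    finally show ?thesis .
  qed
  have "AE x in \<mu>. 0 \<le> ?J x"
    by (intro AE_I2 order_trans[OF _ J_lower]) simp_all
  then have "AE x in \<mu>. ?J x = 0"
    using integral_nonneg_eq_0_iff_AE[OF int] zero by simp
  then have "AE x in \<mu>. x = y"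
  proof eventually_elim
    case (elim x)
    then have "?k x * (y - x)\<^sup>2 \<le> 0" using J_lower[of "?k x" x] by simp
    moreover have "0 < ?k x" by simp
    ultimately have "(y - x)\<^sup>2 \<le> 0" by (metis mult_le_cancel_left_pos mult_zero_right)
    then show ?case by simp
  qed
  then show ?thesis using \<mu> by blast
qed

lemma maximal_if_first_order:
  assumes first_order_optimality
  shows maximal_distribution
  unfolding maximal_distribution_def
proof
  let ?I = "{lower_mean..upper_mean}"
  fix \<psi> assume "\<psi> \<in> C_b_Lip"
  then have cont: "continuous_on UNIV \<psi>" and bdd: "bounded (range \<psi>)"
    using C_b_Lip_bounded_continuous by blast+
  have bdd_I: "bdd_above (\<psi> ` ?I)"
    using bounded_imp_bdd_above[OF bdd] by (auto intro: bdd_above_mono)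
  show "NE Th \<psi> = (SUP y\<in>?I. \<psi> y)"
  proof (rule antisym)
    show "NE Th \<psi> \<le> (SUP y\<in>?I. \<psi> y)"
      unfolding NE_def
    proof (rule cSUP_least[OF nonempty])
      fix \<nu> assume \<nu>: "\<nu> \<in> Th"
      have "AE x in \<nu>. x \<in> ?I"
        using AE_in_interval_if_NE_soft_step_eq_0[OF NE_soft_step_eq_0_if_first_order[OF assms] \<nu>] .
      then have "AE x in \<nu>. \<psi> x \<le> (SUP y\<in>?I. \<psi> y)"
        by eventually_elim (rule cSUP_upper[OF _ bdd_I])
      then show "integral\<^sup>L \<nu> \<psi> \<le> (SUP y\<in>?I. \<psi> y)"
        using prob_space.integral_le_const[OF prob_space[OF \<nu>] integrable_bounded_continuous[OF \<nu> cont bdd]]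
        by blast
    qed
    show "(SUP y\<in>?I. \<psi> y) \<le> NE Th \<psi>"
    proof (rule cSUP_least)
      show "?I \<noteq> {}" using lower_mean_le_upper_mean by simp
      fix y assume "y \<in> ?I"
      then obtain \<mu> where \<mu>: "\<mu> \<in> Th" and Dirac: "AE x in \<mu>. x = y"
        using Dirac_in_Th_if_first_order[OF assms] by blast
      interpret prob_space \<mu> using prob_space \<mu> .
      have "integral\<^sup>L \<mu> \<psi> = integral\<^sup>L \<mu> (\<lambda>x. \<psi> y)"
        using Dirac borel_measurable_continuous[OF \<mu> cont] by (intro integral_cong_AE) auto
      then show "\<psi> y \<le> NE Th \<psi>"
        using integral_le_NE[OF \<mu> cont bdd] by (simp add: prob_space)
    qed
  qed
qed

lemma maximal_iff_first_order: "maximal_distribution \<longleftrightarrow> first_order_optimality"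
  using first_order_optimality_if_maximal maximal_if_first_order by blast

end

theorem proposition6p1:
  fixes Th :: "real measure set"
  assumes "Th \<noteq> {}"
    and "weakly_compact_prob_set Th"
    and "condH Th"
  defines "mu_lo \<equiv> - NE Th (\<lambda>x. - x)"
    and "mu_up \<equiv> NE Th (\<lambda>x. x)"
    and "p \<equiv> (\<lambda>a::real. SUP y\<in>{- NE Th (\<lambda>x. - x) .. NE Th (\<lambda>x. x)}. y * a)"
  shows "(\<forall>\<phi>\<in>C_b_Lip. NE Th \<phi> = (SUP y\<in>{mu_lo..mu_up}. \<phi> y)) \<longleftrightarrow>
         (\<forall>\<phi>\<in>C_b_1. \<forall>\<mu>\<in>Theta_opt Th \<phi>.
            (\<integral>x. (p (deriv \<phi> x) - x * deriv \<phi> x) \<partial>\<mu>) = 0)"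
proof -
  interpret sublinear_expectation Th
    using assms(1-3) by unfold_locales
  have "mu_lo = lower_mean" "mu_up = upper_mean" "p = support"
    unfolding mu_lo_def mu_up_def p_def lower_mean_def upper_mean_def interval_support_def by simp_all
  then show ?thesis
    using maximal_iff_first_order
    unfolding maximal_distribution_def first_order_optimality_def by simp
qed

end
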